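(* Let $x \in \mathbb{C}$ be close to $0$, and let $p,q$ be the operators acting on functions (power series) $f$ of the variable $z$ defined by $$p(f) = \Big[1 - \mu z - \frac{\mu}{z}\Big] f + \Big(\frac{\mu}{z} - 5\delta\Big) f_{|z=0}, \qquad q(f) = -\sqrt{2}\,\delta\, \partial_z f_{|z=0},$$ where $\mu=\mu(x)$ and $\delta=\delta(x)$ are as in the context. For $(\alpha,\beta) \in \mathbb{C}^2$, the system $$\begin{cases} p(f) - q(g) = \alpha, \\ -q(f) + p(g) = \beta \end{cases}$$ admits a unique solution $(f,g) = \left( \sum_{n=0}^\infty f_n z^n, \sum_{n=0}^\infty g_n z^n \right)$ holomorphic in $|z| < 1$, and this solution is given by $$f = \frac{a\,z_-(\mu)}{\mu} \, \frac{1}{1 - z z_-(\mu)}, \qquad g = \frac{b\,z_-(\mu)}{\mu} \, \frac{1}{1-z z_-(\mu)},$$ where the couple $(a,b)\in \mathbb{C}^2$ is the solution of $$\begin{bmatrix} 1 - 5 \delta \frac{z_-}{\mu} & \sqrt{2}\, \delta \frac{z_-^2}{\mu} \\ \sqrt{2}\, \delta \frac{z_-^2}{\mu} & 1 - 5 \delta\frac{ z_-}{\mu} \end{bmatrix} \begin{bmatrix} a \\ b \end{bmatrix} = \begin{bmatrix} \alpha \\ \beta \end{bmatrix}, \qquad z_- = z_-(\mu).$$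
   Context: Let $r = \frac{\sqrt{2}}{3}$, and for $x$ in the complex disc $\{|x|<r\}$ set $\mu = \mu(x) = \frac{2x}{1 + \frac{x^2}{r^2}}$ and $\delta = \delta(x) = \frac{x^2}{1 + \frac{x^2}{r^2}} = \frac{x}{2}\mu$. Let $U = \mathbb{C} \setminus \{\mu \in \mathbb{C} : \mu^2 \in [\frac14, +\infty[\}$, and for $\mu \in U$ define the holomorphic function $z_-(\mu) = \frac{1}{2\mu}\big[1 - \sqrt{1-4\mu^2}\big]$, with the principal determination of the square root on $U$; it satisfies $z_-(0)=0$, $z_-'(0)=1$, $z_-^2 - \frac{z_-}{\mu} + 1 = 0$, and $|z_-(\mu)|<1$ on $U$. At $\mu=0$ (i.e. $x=0$) the quotient $\frac{z_-(\mu)}{\mu}$ is understood as its limit value $1$; in that case $\delta=0$, $p=\mathrm{Id}$ and $q=0$. *)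

theory Defs
  imports "HOL-Complex_Analysis.Complex_Analysis"
begin

definition r_const :: complex where
  "r_const = complex_of_real (sqrt 2 / 3)"

definition mu :: "complex \<Rightarrow> complex" where
  "mu x = 2 * x / (1 + x^2 / r_const^2)"

definition delta :: "complex \<Rightarrow> complex" where
  "delta x = x^2 / (1 + x^2 / r_const^2)"

definition z_minus :: "complex \<Rightarrow> complex" where
  "z_minus m = (1 - csqrt (1 - 4 * m^2)) / (2 * m)"

text \<open>The quotient z_-(mu)/mu, with its limit value 1 at mu = 0.\<close>
definition zm_over_mu :: "complex \<Rightarrow> complex" where
  "zm_over_mu m = (if m = 0 then 1 else z_minus m / m)"

text \<open>Operator p: p(f) = (1 - mu z - mu/z) f + (mu/z - 5 delta) f(0);
  at z = 0 it is given by its (removable) limit value f(0) - mu f'(0) - 5 delta f(0).\<close>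
definition p_op :: "complex \<Rightarrow> complex \<Rightarrow> (complex \<Rightarrow> complex) \<Rightarrow> complex \<Rightarrow> complex" where
  "p_op m d f z =
     (if z = 0 then f 0 - m * deriv f 0 - 5 * d * f 0
      else (1 - m * z - m / z) * f z + (m / z - 5 * d) * f 0)"

definition q_op :: "complex \<Rightarrow> (complex \<Rightarrow> complex) \<Rightarrow> complex" where
  "q_op d f = - complex_of_real (sqrt 2) * d * deriv f 0"

end

theory Submission
  imports Defs
begin

(* Write s = csqrt (1 - 4 m^2), so that z_-(m) = 2 m / (1 + s) and c := z_-(m)/m = 2 / (1 + s).
   The only properties of z_- and c that matter are c m = z_- and c (1 - m z_-) = 1, valid for every
   m including m = 0.
   For the geometric pair F = a c / (1 - z z_-), G = b c / (1 - z z_-) the operator p acts as the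
   constant (1 - 5 d c) and q picks up F'(0) = a c z_-, so the system reduces to the 2x2 matrix of the
   statement. Conversely, for a solution (h, k) of the homogeneous system, evaluating at z = 0 and at
   the root z = z_- of 1 - m z - m/z determines h(0), h'(0), k(0), k'(0) as zero once the matrix is
   invertible; then (1 - m z - m/z) h(z) = 0 forces h = 0 away from z_-, and continuity at z_-. For
   small x the matrix is a perturbation of the identity. *)

lemma symmetric_system_iff:
  fixes A B u v \<alpha> \<beta> :: "'a :: field"
  assumes "A^2 \<noteq> B^2"
  shows "A * u + B * v = \<alpha> \<and> B * u + A * v = \<beta> \<longleftrightarrow>
         u = (A * \<alpha> - B * \<beta>) / (A^2 - B^2) \<and> v = (A * \<beta> - B * \<alpha>) / (A^2 - B^2)"
    (is "?sys \<longleftrightarrow> u = ?u \<and> v = ?v")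
proof -
  have D: "A^2 - B^2 \<noteq> 0" using assms by simp
  have u: "(A^2 - B^2) * u = A * (A * u + B * v) - B * (B * u + A * v)"
    and v: "(A^2 - B^2) * v = A * (B * u + A * v) - B * (A * u + B * v)"
    by (simp_all add: algebra_simps power2_eq_square)
  have uD: "(A^2 - B^2) * ?u = A * \<alpha> - B * \<beta>" and vD: "(A^2 - B^2) * ?v = A * \<beta> - B * \<alpha>"
    using D by simp_all
  have "(A^2 - B^2) * (A * ?u + B * ?v) = A * ((A^2 - B^2) * ?u) + B * ((A^2 - B^2) * ?v)"
    and "(A^2 - B^2) * (B * ?u + A * ?v) = B * ((A^2 - B^2) * ?u) + A * ((A^2 - B^2) * ?v)"
    by (simp_all only: distrib_left mult.left_commute)
  then have \<alpha>: "(A^2 - B^2) * (A * ?u + B * ?v) = (A^2 - B^2) * \<alpha>"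
    and \<beta>: "(A^2 - B^2) * (B * ?u + A * ?v) = (A^2 - B^2) * \<beta>"
    unfolding uD vD by (simp_all add: algebra_simps power2_eq_square)
  show ?thesis
  proof
    assume ?sys
    then show "u = ?u \<and> v = ?v"
      using D u v by (simp add: nonzero_eq_divide_eq mult.commute)
  next
    assume "u = ?u \<and> v = ?v"
    then show ?sys using D \<alpha> \<beta> by simp
  qed
qed

lemma symmetric_system_unique_solution:
  fixes A B :: "'a :: field"
  assumes "A^2 \<noteq> B^2"
  shows "\<exists>!ab. A * fst ab + B * snd ab = \<alpha> \<and> B * fst ab + A * snd ab = \<beta>"
proof -
  have "\<exists>!ab. fst ab = x \<and> snd ab = y" for x y :: 'a
    by (rule ex1I[of _ "(x, y)"]) (simp_all add: prod_eq_iff)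
  then show ?thesis unfolding symmetric_system_iff[OF assms] .
qed

lemma continuous_on_open_eq_zero_at:
  fixes f :: "'a :: {perfect_space, t2_space} \<Rightarrow> 'b :: {t2_space, zero}"
  assumes "continuous_on S f" "open S" "a \<in> S" "\<And>z. z \<in> S \<Longrightarrow> z \<noteq> a \<Longrightarrow> f z = 0"
  shows "f a = 0"
proof -
  have "isCont f a"
    using assms(1,3) continuous_on_eq_continuous_at[OF assms(2)] by blast
  then have "(f \<longlongrightarrow> f a) (at a)" by (simp add: isCont_def)
  moreover have "eventually (\<lambda>z. f z = 0) (at a)"
    using eventually_at_in_open[OF assms(2,3)] by (rule eventually_mono) (simp add: assms(4))
  then have "(f \<longlongrightarrow> 0) (at a)" by (rule tendsto_eventually)
  ultimately show ?thesis by (rule tendsto_unique[OF at_neq_bot])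
qed

lemma one_le_norm_one_plus_csqrt: "1 \<le> norm (1 + csqrt w)"
proof -
  have "1 \<le> Re (1 + csqrt w)" using Re_csqrt[of w] by simp
  then show ?thesis using complex_Re_le_cmod order_trans by blast
qed

(* At m = 0 both sides are 0, the left one because division by zero yields 0. *)
lemma z_minus_eq: "z_minus m = 2 * m / (1 + csqrt (1 - 4 * m^2))"
proof -
  define s where "s = csqrt (1 - 4 * m^2)"
  have "1 + s \<noteq> 0" using one_le_norm_one_plus_csqrt[of "1 - 4 * m^2"] unfolding s_def by auto
  moreover have "s^2 = 1 - 4 * m^2" unfolding s_def by simp
  ultimately show ?thesis
    unfolding z_minus_def s_def[symmetric] by (cases "m = 0") (auto simp: field_simps power2_eq_square)
qed

lemma zm_over_mu_eq: "zm_over_mu m = 2 / (1 + csqrt (1 - 4 * m^2))"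
  using one_le_norm_one_plus_csqrt[of "1 - 4 * m^2"]
  by (auto simp: zm_over_mu_def z_minus_eq)

lemma zm_over_mu_mult: "zm_over_mu m * m = z_minus m"
  by (simp add: zm_over_mu_def z_minus_def)

lemma zm_over_mu_mult_one_minus: "zm_over_mu m * (1 - m * z_minus m) = 1"
proof -
  define s where "s = csqrt (1 - 4 * m^2)"
  have nz: "1 + s \<noteq> 0" using one_le_norm_one_plus_csqrt[of "1 - 4 * m^2"] unfolding s_def by auto
  have "s^2 = 1 - 4 * m^2" unfolding s_def by simp
  then have key: "2 * (1 + s - 2 * m^2) = (1 + s)^2" by algebra
  have "zm_over_mu m * (1 - m * z_minus m) = 2 * (1 + s - 2 * m^2) / (1 + s)^2"
    unfolding z_minus_eq zm_over_mu_eq s_def[symmetric]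
    using nz by (simp add: field_simps power2_eq_square)
  also have "\<dots> = (1 + s)^2 / (1 + s)^2" by (simp only: key)
  also have "\<dots> = 1" using nz by simp
  finally show ?thesis .
qed

lemma norm_zm_over_mu_le: "norm (zm_over_mu m) \<le> 2"
  using one_le_norm_one_plus_csqrt[of "1 - 4 * m^2"]
  by (simp add: zm_over_mu_eq norm_divide divide_le_eq)

lemma norm_z_minus_le: "norm (z_minus m) \<le> 2 * norm m"
proof -
  have "norm (z_minus m) = norm (zm_over_mu m) * norm m"
    by (simp flip: zm_over_mu_mult add: norm_mult)
  also have "\<dots> \<le> 2 * norm m" by (rule mult_right_mono[OF norm_zm_over_mu_le]) simp
  finally show ?thesis .
qed

lemma z_minus_sq_div: "z_minus m ^ 2 * (if m = 0 then 0 else 1 / m) = zm_over_mu m * z_minus m"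
  by (simp add: zm_over_mu_def z_minus_def power2_eq_square)

lemma delta_eq_mu: "delta x = x / 2 * mu x"
  by (simp add: delta_def mu_def power2_eq_square)

lemma norm_mu_le:
  assumes "norm x \<le> 1/3"
  shows "norm (mu x) \<le> 4 * norm x"
proof -
  define D where "D = 1 + x^2 / r_const^2"
  have r2: "r_const^2 = 2/9"
    by (simp add: r_const_def power_divide flip: of_real_power)
  have D: "D = 1 + 9/2 * x^2" unfolding D_def r2 by simp
  have "norm (9/2 * x^2) \<le> 9/2 * (1/3)^2"
    using assms by (simp add: norm_mult norm_power power_mono)
  moreover have "1 - norm (9/2 * x^2) \<le> norm D"
    unfolding D using norm_triangle_ineq2[of 1 "- (9/2 * x^2)"] by simp
  ultimately have "1/2 \<le> norm D" by (simp add: power2_eq_square)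
  have "norm (mu x) = 2 * norm x / norm D" by (simp add: mu_def D_def norm_divide norm_mult)
  also have "\<dots> \<le> 4 * norm x"
    using \<open>1/2 \<le> norm D\<close> mult_left_mono[OF \<open>1/2 \<le> norm D\<close>, of "4 * norm x"]
    by (simp add: divide_le_eq)
  finally show ?thesis .
qed

lemma p_op_zero_params: "p_op 0 0 f z = f z"
  by (simp add: p_op_def)

lemma q_op_zero_param: "q_op 0 g = 0"
  by (simp add: q_op_def)

lemma p_op_diff:
  assumes "f field_differentiable at 0" "g field_differentiable at 0"
  shows "p_op m d (\<lambda>z. f z - g z) z = p_op m d f z - p_op m d g z"
  unfolding p_op_def deriv_diff[OF assms] by (simp add: algebra_simps)

lemma q_op_diff:
  assumes "f field_differentiable at 0" "g field_differentiable at 0"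
  shows "q_op d (\<lambda>z. f z - g z) = q_op d f - q_op d g"
  unfolding q_op_def deriv_diff[OF assms] by (simp add: algebra_simps)

lemma one_minus_mult_nonzero:
  fixes w z :: complex
  assumes "norm w \<le> 1" "z \<in> ball 0 1"
  shows "1 - z * w \<noteq> 0"
proof -
  have "norm z * norm w < 1"
    using assms mult_left_le[of "norm w" "norm z"] by simp
  then have "norm (z * w) < 1" by (simp add: norm_mult)
  then show ?thesis by auto
qed

lemma holomorphic_geometric:
  fixes b w :: complex
  assumes "norm w \<le> 1"
  shows "(\<lambda>z. b / (1 - z * w)) holomorphic_on ball 0 1"
  using one_minus_mult_nonzero[OF assms] by (auto intro!: holomorphic_intros)

lemma deriv_geometric: "deriv (\<lambda>z. b / (1 - z * w)) 0 = b * w"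
proof -
  have "((\<lambda>z. b / (1 - z * w)) has_field_derivative b * w) (at 0)"
    by (auto intro!: derivative_eq_intros)
  then show ?thesis by (rule DERIV_imp_deriv)
qed

lemma q_op_geometric: "q_op d (\<lambda>z. b / (1 - z * w)) = - complex_of_real (sqrt 2) * d * (b * w)"
  by (simp add: q_op_def deriv_geometric)

lemma p_op_geometric:
  assumes cm: "c * m = w" and c: "c * (1 - m * w) = 1" and z: "1 - z * w \<noteq> 0"
  shows "p_op m d (\<lambda>z. a * c / (1 - z * w)) z = (1 - 5 * d * c) * a"
proof (cases "z = 0")
  case True
  have "p_op m d (\<lambda>z. a * c / (1 - z * w)) z = a * (c * (1 - m * w)) - 5 * d * c * a"
    using True by (simp add: p_op_def deriv_geometric algebra_simps)
  then show ?thesis by (simp only: c) (simp add: algebra_simps)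
next
  case False
  have "(1 - m * z - m / z) * c + m / z * c * (1 - z * w) = c * (1 - m * w) - c * m * z"
    using False by (simp add: field_simps)
  then have key: "(1 - m * z - m / z) * c + m / z * c * (1 - z * w) = 1 - z * w"
    by (simp add: c cm mult.commute)
  have "p_op m d (\<lambda>z. a * c / (1 - z * w)) z
        = a * (((1 - m * z - m / z) * c + m / z * c * (1 - z * w)) / (1 - z * w)) - 5 * d * c * a"
    using False z by (simp add: p_op_def field_simps)
  also have "\<dots> = (1 - 5 * d * c) * a"
    unfolding key using z by (simp add: algebra_simps)
  finally show ?thesis .
qed

lemma geometric_pair_solves:
  fixes s :: complex
  defines "s \<equiv> complex_of_real (sqrt 2)"
  assumes cm: "c * m = w" and c: "c * (1 - m * w) = 1" and z: "1 - z * w \<noteq> 0"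
  shows "p_op m d (\<lambda>z. a * c / (1 - z * w)) z - q_op d (\<lambda>z. b * c / (1 - z * w))
           = (1 - 5 * d * c) * a + (s * d * c * w) * b"
    and "- q_op d (\<lambda>z. a * c / (1 - z * w)) + p_op m d (\<lambda>z. b * c / (1 - z * w)) z
           = (s * d * c * w) * a + (1 - 5 * d * c) * b"
  unfolding p_op_geometric[OF cm c z] q_op_geometric s_def by (simp_all add: algebra_simps)

(* The equations at w give h'(0) = w h(0) and k'(0) = w k(0); then (h(0), k(0)) solves the
   homogeneous 2x2 system. *)
lemma kernel_initial_values:
  fixes c m w d s h0 h1 k0 k1 :: complex
  assumes cm: "c * m = w" and c: "c * (1 - m * w) = 1" and w: "w \<noteq> 0"
    and det: "(1 - 5 * d * c)^2 \<noteq> (s * d * c * w)^2"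
    and at0: "h0 - m * h1 - 5 * d * h0 + s * d * k1 = 0" "k0 - m * k1 - 5 * d * k0 + s * d * h1 = 0"
    and atw: "(m / w - 5 * d) * h0 + s * d * k1 = 0" "(m / w - 5 * d) * k0 + s * d * h1 = 0"
  shows "h0 = 0 \<and> k0 = 0 \<and> h1 = 0 \<and> k1 = 0"
proof -
  have cmw: "c * (m / w) = 1" using cm w by (simp add: field_simps)
  have expand: "c * ((q - 5 * d) * u + s * d * v) = (c * q) * u - 5 * d * c * u + s * d * c * v"
    for q u v by (simp add: algebra_simps)
  have reduced: "(1 - 5 * d * c) * h0 + s * d * c * k1 = 0" "(1 - 5 * d * c) * k0 + s * d * c * h1 = 0"
    using expand[of "m / w" h0 k1] expand[of "m / w" k0 h1] unfolding atw cmw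
    by (simp_all add: algebra_simps)
  have "c - 1 = (c * m) * w" using c by (simp add: algebra_simps)
  then have c_minus_1: "c - 1 = w^2" by (simp add: cm power2_eq_square)
  have step: "w * (w * u - u') = 0"
    if "u - m * u' - 5 * d * u + s * d * v' = 0" "(1 - 5 * d * c) * u + s * d * c * v' = 0" for u u' v'
  proof -
    have "c * (u - m * u' - 5 * d * u + s * d * v') - ((1 - 5 * d * c) * u + s * d * c * v')
          = (c - 1) * u - (c * m) * u'" by (simp add: algebra_simps)
    then have "w^2 * u - w * u' = 0" unfolding that cm c_minus_1 by simp
    then show ?thesis by (simp add: right_diff_distrib power2_eq_square mult.assoc)
  qed
  have "w * (w * h0 - h1) = 0" "w * (w * k0 - k1) = 0"
    using step[OF at0(1) reduced(1)] step[OF at0(2) reduced(2)] .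
  then have h1: "h1 = w * h0" and k1: "k1 = w * k0" using w by simp_all
  have "(1 - 5 * d * c) * h0 + (s * d * c * w) * k0 = 0 \<and> (s * d * c * w) * h0 + (1 - 5 * d * c) * k0 = 0"
    using reduced unfolding h1 k1 by (simp add: algebra_simps)
  then have "h0 = 0 \<and> k0 = 0"
    using symmetric_system_iff[OF det] by simp
  then show ?thesis using h1 k1 by simp
qed

(* The roots of m z^2 - z + m are w and 1/w, and only w lies in the unit disc. *)
lemma kernel_factor:
  fixes c m w z :: complex
  assumes cm: "c * m = w" and c: "c * (1 - m * w) = 1" and w: "w \<noteq> 0" and z: "z \<noteq> 0"
  shows "1 - m * z - m / z = m / (z * w) * (z - w) * (1 - z * w)"
proof -
  have "c = 1 + (c * m) * w" using c by (simp add: algebra_simps)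
  then have "c = 1 + w^2" by (simp add: cm power2_eq_square)
  then have "m * (1 + w^2) = w" using cm by (simp add: mult.commute)
  then have "w * z = m * (1 + w^2) * z" by simp
  also have "\<dots> = m * z + m * (w * (w * z))" by (simp add: algebra_simps power2_eq_square)
  finally show ?thesis using w z by (simp add: field_simps)
qed

lemma kernel_trivial:
  fixes c m w d :: complex and h k :: "complex \<Rightarrow> complex"
  defines "s \<equiv> complex_of_real (sqrt 2)"
  assumes cm: "c * m = w" and c: "c * (1 - m * w) = 1" and m: "m \<noteq> 0" and w1: "norm w < 1"
    and det: "(1 - 5 * d * c)^2 \<noteq> (s * d * c * w)^2"
    and hol: "h holomorphic_on ball 0 1" "k holomorphic_on ball 0 1"
    and sol: "\<forall>z\<in>ball 0 1. p_op m d h z - q_op d k = 0 \<and> - q_op d h + p_op m d k z = 0"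
  shows "\<forall>z\<in>ball 0 1. h z = 0 \<and> k z = 0"
proof -
  have w: "w \<noteq> 0" using cm c m by auto
  have w_in: "w \<in> ball 0 1" using w1 by simp
  have factor_w: "1 - m * w - m / w = 0" using kernel_factor[OF cm c w w] by simp
  have init: "h 0 = 0 \<and> k 0 = 0 \<and> deriv h 0 = 0 \<and> deriv k 0 = 0"
  proof (rule kernel_initial_values[OF cm c w det])
    show "h 0 - m * deriv h 0 - 5 * d * h 0 + s * d * deriv k 0 = 0"
      and "k 0 - m * deriv k 0 - 5 * d * k 0 + s * d * deriv h 0 = 0"
      using sol[rule_format, of 0] by (simp_all add: p_op_def q_op_def s_def algebra_simps)
    show "(m / w - 5 * d) * h 0 + s * d * deriv k 0 = 0"
      and "(m / w - 5 * d) * k 0 + s * d * deriv h 0 = 0"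
      using sol[rule_format, OF w_in] w unfolding p_op_def q_op_def factor_w
      by (simp_all add: s_def algebra_simps)
  qed
  have off: "h z = 0 \<and> k z = 0" if z: "z \<in> ball 0 1" "z \<noteq> w" for z
  proof (cases "z = 0")
    case False
    have "1 - z * w \<noteq> 0" using one_minus_mult_nonzero[of w z] w1 z by simp
    then have "1 - m * z - m / z \<noteq> 0"
      unfolding kernel_factor[OF cm c w False] using m w z False by simp
    moreover have "(1 - m * z - m / z) * h z = 0" "(1 - m * z - m / z) * k z = 0"
      using sol[rule_format, OF z(1)] init False by (simp_all add: p_op_def q_op_def)
    ultimately show ?thesis by simp
  qed (use init in simp)
  have "h w = 0" "k w = 0"
    using continuous_on_open_eq_zero_at[OF holomorphic_on_imp_continuous_on[OF hol(1)] _ w_in]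
      continuous_on_open_eq_zero_at[OF holomorphic_on_imp_continuous_on[OF hol(2)] _ w_in] off
    by auto
  then show ?thesis using off by blast
qed

lemma system_solution_unique:
  fixes c m w d \<alpha> \<beta> :: complex and f g F G :: "complex \<Rightarrow> complex"
  defines "s \<equiv> complex_of_real (sqrt 2)"
  assumes cm: "c * m = w" and c: "c * (1 - m * w) = 1" and w1: "norm w < 1"
    and d: "m = 0 \<Longrightarrow> d = 0"
    and det: "(1 - 5 * d * c)^2 \<noteq> (s * d * c * w)^2"
    and hol: "f holomorphic_on ball 0 1" "g holomorphic_on ball 0 1"
      "F holomorphic_on ball 0 1" "G holomorphic_on ball 0 1"
    and sol_fg: "\<forall>z\<in>ball 0 1. p_op m d f z - q_op d g = \<alpha> \<and> - q_op d f + p_op m d g z = \<beta>"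
    and sol_FG: "\<forall>z\<in>ball 0 1. p_op m d F z - q_op d G = \<alpha> \<and> - q_op d F + p_op m d G z = \<beta>"
  shows "\<forall>z\<in>ball 0 1. f z = F z \<and> g z = G z"
proof (cases "m = 0")
  case True
  then show ?thesis using sol_fg sol_FG d by (simp add: p_op_zero_params q_op_zero_param)
next
  case False
  have diff: "f field_differentiable at 0" "g field_differentiable at 0"
    "F field_differentiable at 0" "G field_differentiable at 0"
    using hol by (auto intro: holomorphic_on_imp_differentiable_at)
  have "\<forall>z\<in>ball 0 1. f z - F z = 0 \<and> g z - G z = 0"
  proof (rule kernel_trivial[OF cm c False w1 det[unfolded s_def]])
    show "(\<lambda>z. f z - F z) holomorphic_on ball 0 1" "(\<lambda>z. g z - G z) holomorphic_on ball 0 1"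
      using hol by (auto intro!: holomorphic_intros)
    show "\<forall>z\<in>ball 0 1. p_op m d (\<lambda>z. f z - F z) z - q_op d (\<lambda>z. g z - G z) = 0 \<and>
                       - q_op d (\<lambda>z. f z - F z) + p_op m d (\<lambda>z. g z - G z) z = 0"
      using sol_fg sol_FG by (simp add: p_op_diff q_op_diff diff algebra_simps)
  qed
  then show ?thesis by simp
qed

lemma geometric_pair_unique_solution:
  fixes c m w d a b \<alpha> \<beta> :: complex
  defines "s \<equiv> complex_of_real (sqrt 2)"
    and "F \<equiv> \<lambda>z. a * c / (1 - z * w)" and "G \<equiv> \<lambda>z. b * c / (1 - z * w)"
  assumes cm: "c * m = w" and c: "c * (1 - m * w) = 1" and w1: "norm w < 1"
    and d: "m = 0 \<Longrightarrow> d = 0"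
    and det: "(1 - 5 * d * c)^2 \<noteq> (s * d * c * w)^2"
    and ab: "(1 - 5 * d * c) * a + (s * d * c * w) * b = \<alpha>"
      "(s * d * c * w) * a + (1 - 5 * d * c) * b = \<beta>"
  shows "F holomorphic_on ball 0 1 \<and> G holomorphic_on ball 0 1 \<and>
    (\<forall>z\<in>ball 0 1. p_op m d F z - q_op d G = \<alpha> \<and> - q_op d F + p_op m d G z = \<beta>) \<and>
    (\<forall>f g. f holomorphic_on ball 0 1 \<and> g holomorphic_on ball 0 1 \<and>
       (\<forall>z\<in>ball 0 1. p_op m d f z - q_op d g = \<alpha> \<and> - q_op d f + p_op m d g z = \<beta>)
       \<longrightarrow> (\<forall>z\<in>ball 0 1. f z = F z \<and> g z = G z))"
proof -
  have hol: "F holomorphic_on ball 0 1" "G holomorphic_on ball 0 1"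
    unfolding F_def G_def using w1 by (simp_all add: holomorphic_geometric)
  have sol: "\<forall>z\<in>ball 0 1. p_op m d F z - q_op d G = \<alpha> \<and> - q_op d F + p_op m d G z = \<beta>"
    using geometric_pair_solves[OF cm c one_minus_mult_nonzero] w1 ab
    unfolding F_def G_def s_def by (simp add: add.commute)
  show ?thesis
    using hol sol system_solution_unique[OF cm c w1 d det[unfolded s_def]] by blast
qed

lemma coefficient_det_nonzero:
  fixes d c w :: complex
  assumes d: "norm d \<le> 1/20" and c: "norm c \<le> 2" and w: "norm w \<le> 1"
  shows "(1 - 5 * d * c)^2 \<noteq> (complex_of_real (sqrt 2) * d * c * w)^2"
proof
  have "norm (5 * d * c) \<le> 5 * (1/20) * 2"
    unfolding norm_mult using d c by (intro mult_mono) auto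
  then have A: "1/2 \<le> norm (1 - 5 * d * c)"
    using norm_triangle_ineq2[of 1 "5 * d * c"] by simp
  have "sqrt 2 \<le> 3/2" by (rule real_le_lsqrt) (auto simp: power2_eq_square)
  then have "norm (complex_of_real (sqrt 2) * d * c * w) \<le> 3/2 * (1/20) * 2 * 1"
    unfolding norm_mult using d c w by (intro mult_mono) auto
  moreover assume "(1 - 5 * d * c)^2 = (complex_of_real (sqrt 2) * d * c * w)^2"
  then have "norm (1 - 5 * d * c) = norm (complex_of_real (sqrt 2) * d * c * w)"
    by (metis norm_power power2_eq_iff_nonneg norm_ge_zero)
  ultimately show False using A by simp
qed

theorem lemma7:
  "\<exists>\<epsilon>>0. \<forall>x::complex. norm x < \<epsilon> \<longrightarrow>
     (let m = mu x; d = delta x; zm = z_minus m; c = zm_over_mu m;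
          A11 = 1 - 5 * d * c; A12 = complex_of_real (sqrt 2) * d * zm^2 * (if m = 0 then 0 else 1 / m)
      in
      (\<forall>\<alpha> \<beta>::complex. \<exists>!ab::complex \<times> complex.
          A11 * fst ab + A12 * snd ab = \<alpha> \<and> A12 * fst ab + A11 * snd ab = \<beta>) \<and>
      (\<forall>\<alpha> \<beta> a b::complex.
          A11 * a + A12 * b = \<alpha> \<and> A12 * a + A11 * b = \<beta> \<longrightarrow>
          (let F = (\<lambda>z. a * c / (1 - z * zm)); G = (\<lambda>z. b * c / (1 - z * zm)) in
            F holomorphic_on ball 0 1 \<and> G holomorphic_on ball 0 1 \<and>
            (\<forall>z\<in>ball 0 1. p_op m d F z - q_op d G = \<alpha> \<and> - q_op d F + p_op m d G z = \<beta>) \<and>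
            (\<forall>f g. f holomorphic_on ball 0 1 \<and> g holomorphic_on ball 0 1 \<and>
                (\<forall>z\<in>ball 0 1. p_op m d f z - q_op d g = \<alpha> \<and> - q_op d f + p_op m d g z = \<beta>)
                \<longrightarrow> (\<forall>z\<in>ball 0 1. f z = F z \<and> g z = G z)))))"
  apply (intro exI[of _ "1/100"] conjI allI impI)
   apply simp
  subgoal premises x_small for x
  proof -
    define m d w c where "m = mu x" and "d = delta x" and "w = z_minus m" and "c = zm_over_mu m"
    have cm: "c * m = w" and c1: "c * (1 - m * w) = 1"
      unfolding c_def w_def by (rule zm_over_mu_mult zm_over_mu_mult_one_minus)+
    have c2: "norm c \<le> 2" unfolding c_def by (rule norm_zm_over_mu_le)
    have m: "norm m \<le> 4 / 100" using norm_mu_le[of x] x_small by (simp add: m_def)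
    then have w: "norm w \<le> 8 / 100" using norm_z_minus_le[of m] by (simp add: w_def)
    have "norm d = norm x / 2 * norm m"
      by (simp add: d_def delta_eq_mu[of x, folded m_def] norm_mult norm_divide)
    also have "\<dots> \<le> 1 * (4 / 100)" using x_small m by (intro mult_mono) auto
    finally have d: "norm d \<le> 1/20" by simp
    have dm: "m = 0 \<Longrightarrow> d = 0" by (simp add: d_def delta_eq_mu[of x, folded m_def])
    have det: "(1 - 5 * d * c)^2 \<noteq> (complex_of_real (sqrt 2) * d * c * w)^2"
      using coefficient_det_nonzero[OF d c2] w by simp
    have B: "complex_of_real (sqrt 2) * d * w^2 * (if m = 0 then 0 else 1 / m)
             = complex_of_real (sqrt 2) * d * c * w"
      using z_minus_sq_div[of m] by (simp add: w_def c_def mult.assoc)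
    show ?thesis
      unfolding Let_def m_def[symmetric] d_def[symmetric] w_def[symmetric] c_def[symmetric] B
      using symmetric_system_unique_solution[OF det] geometric_pair_unique_solution[OF cm c1 _ dm det] w
      by simp
  qed
  done

end
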